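(* For every measurable space $X$ define $\lambda_X:\mathbb DFX\to F\mathbb DX$ by $$\lambda_X=\big\langle g\circ\mathbb D\pi^{1}_X,\ g\circ\mathbb D\pi^{*}_X,\ a\mapsto\mathbb D\pi^a_X\big\rangle,$$ where $g:\mathbb D\mathbb I\to\mathbb I$, $g(m)=\int_{\mathbb I}\mathrm{id}_{\mathbb I}\,dm$. Then each $\lambda_X$ is measurable, and for every measurable $f:X\to Y$: $\lambda_Y\circ\mathbb DFf=F\mathbb Df\circ\lambda_X$; $\lambda_X\circ\eta_{FX}=F\eta_X$; and $F\mu_X\circ\lambda_{\mathbb DX}\circ\mathbb D\lambda_X=\lambda_X\circ\mu_{FX}$. Consequently $\lambda:\mathbb DF\Rightarrow F\mathbb D$ is a distributive law of the monad $\mathbb D$ over the functor $F$.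
   Context: Work in $\mathbf{Meas}$. $\mathbb I=[0,1]$ with its Borel $\sigma$-algebra; $A$ a finite alphabet. For a measurable space $(X,\Sigma_X)$, $\mathbb DX$ is the set of sub-probability measures on $X$ with the $\sigma$-algebra generated by the maps $e^X_S(m)=m(S)$, $S\in\Sigma_X$; $\mathbb Df(m)=m\circ f^{-1}$; the sub-Giry monad $(\mathbb D,\eta,\mu)$ has $\eta_X(x)(S)=\mathbf 1_S(x)$ and $\mu_X(\Phi)(S)=\int_{\mathbb DX}e^X_S\,d\Phi$. The functor $F$ is $FX=\mathbb I\times\mathbb I\times X^A$ with the product $\sigma$-algebra and $Ff=\mathrm{id}_{\mathbb I}\times\mathrm{id}_{\mathbb I}\times f^A$. We write $\mathrm{id}_{FX}=\langle\pi^1_X,\pi^*_X,a\mapsto\pi^a_X\rangle$, i.e. $\pi^1_X,\pi^*_X:FX\to\mathbb I$ are the first two projections and $\pi^a_X:FX\to X$ is the projection onto the $a$-component. A distributive law is a natural transformation $\lambda:\mathbb DF\Rightarrow F\mathbb D$ with $\lambda_X\circ\eta_{FX}=F\eta_X$ and $\lambda_X\circ\mu_{FX}=F\mu_X\circ\lambda_{\mathbb DX}\circ\mathbb D\lambda_X$. *)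

theory Defs
  imports "HOL-Probability.Probability"
begin

definition unitI :: "real measure" where
  "unitI = restrict_space borel {0..1}"

text \<open>The functor F X = I x I x X^A (product sigma-algebra); the finite alphabet A is
  the finite type 'a, and X^A is the product space over all letters.\<close>
definition FM :: "'x measure \<Rightarrow> (real \<times> real \<times> ('a::finite \<Rightarrow> 'x)) measure" where
  "FM X = unitI \<Otimes>\<^sub>M (unitI \<Otimes>\<^sub>M (\<Pi>\<^sub>M a\<in>UNIV. X))"

definition Fmap :: "('x \<Rightarrow> 'y) \<Rightarrow> real \<times> real \<times> ('a \<Rightarrow> 'x) \<Rightarrow> real \<times> real \<times> ('a \<Rightarrow> 'y)" where
  "Fmap f = (\<lambda>(r, s, h). (r, s, \<lambda>a. f (h a)))"

text \<open>Action of the sub-Giry functor D on maps: pushforward (D f)(m) = m o f^{-1},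
  landing in D Y.  The sub-Giry space D X is subprob_algebra X, the unit is return,
  the multiplication is join.\<close>
definition Dmap :: "'y measure \<Rightarrow> ('x \<Rightarrow> 'y) \<Rightarrow> 'x measure \<Rightarrow> 'y measure" where
  "Dmap Y f m = distr m Y f"

definition gI :: "real measure \<Rightarrow> real" where
  "gI m = (\<integral>x. x \<partial>m)"

definition lam :: "'x measure \<Rightarrow> (real \<times> real \<times> ('a::finite \<Rightarrow> 'x)) measure
                    \<Rightarrow> real \<times> real \<times> ('a \<Rightarrow> 'x measure)" where
  "lam X \<Phi> = (gI (Dmap unitI fst \<Phi>),
              gI (Dmap unitI (\<lambda>p. fst (snd p)) \<Phi>),
              \<lambda>a. Dmap X (\<lambda>p. snd (snd p) a) \<Phi>)"

end

theory Submission
  imports Defs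
begin

text \<open>The letter components of \<open>\<lambda>\<close> are pushforwards, so every law holds for them by
  functoriality of pushforward and naturality of \<open>join\<close>.  The two interval components are
  means \<open>g \<circ> \<D>\<pi>\<close> of a coordinate \<open>\<pi>\<close>: for them the unit law is \<open>\<integral>\<pi> d\<delta>\<^sub>x = \<pi> x\<close>,
  naturality is change of variables, and the multiplication law says that the mean of the
  mixture \<open>join \<Psi>\<close> is the \<open>\<Psi>\<close>-average of the means.  They land in \<open>\<II>\<close> because a
  sub-probability measure on \<open>\<II>\<close> has its mean in \<open>\<II>\<close>.\<close>

lemma space_unitI [simp]: "space unitI = {0..1}"
  by (simp add: unitI_def space_restrict_space)

lemma measurable_ident_unitI [measurable]: "(\<lambda>x. x) \<in> borel_measurable unitI"
  unfolding unitI_def by (rule measurable_restrict_space1) simp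

lemma measurable_FM_fst [measurable]: "fst \<in> FM X \<rightarrow>\<^sub>M unitI"
  unfolding FM_def by measurable

lemma measurable_FM_fst_snd [measurable]: "(\<lambda>p. fst (snd p)) \<in> FM X \<rightarrow>\<^sub>M unitI"
  unfolding FM_def by measurable

lemma measurable_FM_component [measurable]:
  "(\<lambda>p. snd (snd p) a) \<in> (FM X :: (real \<times> real \<times> ('a::finite \<Rightarrow> 'x)) measure) \<rightarrow>\<^sub>M X"
  unfolding FM_def by measurable

lemma measurable_PiM_UNIV_I:
  "(\<And>i. (\<lambda>x. f x i) \<in> N \<rightarrow>\<^sub>M M i) \<Longrightarrow> f \<in> N \<rightarrow>\<^sub>M (\<Pi>\<^sub>M i\<in>UNIV. M i)"
  using measurable_restrict[of UNIV "\<lambda>i x. f x i" N M] by (simp add: restrict_UNIV)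

lemma sets_eq_of_space_subprob_algebra:
  "N \<in> space (subprob_algebra M) \<Longrightarrow> sets N = sets M"
  by (simp add: space_subprob_algebra)

lemma gI_in_unit:
  assumes "m \<in> space (subprob_algebra unitI)"
  shows "gI m \<in> {0..1}"
proof -
  interpret subprob_space m
    using assms by (simp add: space_subprob_algebra)
  have sets_m: "sets m = sets unitI"
    using assms by (rule sets_eq_of_space_subprob_algebra)
  have space_m: "space m = {0..1}"
    using sets_eq_imp_space_eq[OF sets_m] by simp
  have "integrable m (\<lambda>x. x)"
    by (rule integrable_const_bound[where B = 1])
       (auto simp: space_m measurable_cong_sets[OF sets_m refl])
  then have "gI m \<le> (\<integral>x. 1 \<partial>m)"
    unfolding gI_def by (rule integral_mono) (auto simp: space_m)
  also have "\<dots> \<le> 1"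
    using subprob_measure_le_1[of "space m"] by simp
  finally have "gI m \<le> 1" .
  moreover have "0 \<le> gI m"
    unfolding gI_def by (rule integral_nonneg_AE, rule AE_I2) (simp add: space_m)
  ultimately show ?thesis by simp
qed

lemma measurable_gI [measurable]: "gI \<in> subprob_algebra unitI \<rightarrow>\<^sub>M unitI"
proof -
  have "gI \<in> subprob_algebra unitI \<rightarrow>\<^sub>M borel"
    unfolding gI_def by measurable
  then show ?thesis
    using gI_in_unit unfolding unitI_def
    by (intro measurable_restrict_space2) (auto simp: unitI_def[symmetric])
qed

lemma measurable_gI_distr:
  "\<pi> \<in> M \<rightarrow>\<^sub>M unitI \<Longrightarrow> (\<lambda>N. gI (distr N unitI \<pi>)) \<in> subprob_algebra M \<rightarrow>\<^sub>M unitI"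
  by (rule measurable_compose[OF measurable_distr measurable_gI])

lemma gI_distr:
  assumes "N \<in> space (subprob_algebra M)" and "\<pi> \<in> M \<rightarrow>\<^sub>M unitI"
  shows "gI (distr N unitI \<pi>) = (\<integral>x. \<pi> x \<partial>N)"
proof -
  have "\<pi> \<in> N \<rightarrow>\<^sub>M unitI"
    using assms measurable_cong_sets[OF sets_eq_of_space_subprob_algebra refl] by blast
  then show ?thesis
    unfolding gI_def by (simp add: integral_distr)
qed

lemma gI_return: "x \<in> {0..1} \<Longrightarrow> gI (return unitI x) = x"
  by (simp add: gI_def integral_return)

lemma gI_distr_join:
  assumes \<Psi>: "\<Psi> \<in> space (subprob_algebra (subprob_algebra M))" and \<pi>: "\<pi> \<in> M \<rightarrow>\<^sub>M unitI"
  shows "gI (distr (join \<Psi>) unitI \<pi>) = (\<integral>N. gI (distr N unitI \<pi>) \<partial>\<Psi>)"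
proof -
  have sets_\<Psi>: "sets \<Psi> = sets (subprob_algebra M)"
    using \<Psi> by (rule sets_eq_of_space_subprob_algebra)
  then have space_\<Psi>: "space \<Psi> = space (subprob_algebra M)"
    by (rule sets_eq_imp_space_eq)
  have "gI (distr (join \<Psi>) unitI \<pi>) = (\<integral>x. \<pi> x \<partial>join \<Psi>)"
    using gI_distr[OF measurable_space[OF measurable_join \<Psi>] \<pi>] .
  also have "\<dots> = (\<integral>N. (\<integral>x. \<pi> x \<partial>N) \<partial>\<Psi>)"
  proof (rule integral_join[where B = 1 and B' = 1, OF _ _ sets_\<Psi>])
    show "\<pi> \<in> borel_measurable M"
      using measurable_compose[OF \<pi> measurable_ident_unitI] by simp
    show "\<bar>\<pi> x\<bar> \<le> 1" if "x \<in> space M" for x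
      using measurable_space[OF \<pi> that] by auto
    show "finite_measure \<Psi>"
      using \<Psi> by (simp add: space_subprob_algebra subprob_space_def)
    show "AE N in \<Psi>. emeasure N (space N) \<le> ennreal 1"
      by (rule AE_I2) (auto simp: space_\<Psi> space_subprob_algebra dest: subprob_space.emeasure_space_le_1)
  qed
  also have "\<dots> = (\<integral>N. gI (distr N unitI \<pi>) \<partial>\<Psi>)"
    by (rule Bochner_Integration.integral_cong) (simp_all add: space_\<Psi> gI_distr \<pi>)
  finally show ?thesis .
qed

lemma measurable_Fmap:
  assumes f: "f \<in> X \<rightarrow>\<^sub>M Y"
  shows "Fmap f \<in> (FM X :: (real \<times> real \<times> ('a::finite \<Rightarrow> 'x)) measure)
           \<rightarrow>\<^sub>M (FM Y :: (real \<times> real \<times> ('a \<Rightarrow> 'y)) measure)"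
proof -
  have "(\<lambda>p a. f (snd (snd p) a)) \<in> (FM X :: (real \<times> real \<times> ('a \<Rightarrow> 'x)) measure) \<rightarrow>\<^sub>M (\<Pi>\<^sub>M a\<in>UNIV. Y)"
    by (intro measurable_PiM_UNIV_I measurable_compose[OF measurable_FM_component f])
  then show ?thesis
    unfolding Fmap_def split_beta' FM_def[of Y] by (intro measurable_Pair) simp_all
qed

lemma measurable_lam:
  "lam X \<in> subprob_algebra (FM X :: (real \<times> real \<times> ('a::finite \<Rightarrow> 'x)) measure)
            \<rightarrow>\<^sub>M (FM (subprob_algebra X) :: (real \<times> real \<times> ('a \<Rightarrow> 'x measure)) measure)"
proof -
  have "(\<lambda>\<Phi> a. distr \<Phi> X (\<lambda>p. snd (snd p) a))
          \<in> subprob_algebra (FM X :: (real \<times> real \<times> ('a \<Rightarrow> 'x)) measure) \<rightarrow>\<^sub>M (\<Pi>\<^sub>M a\<in>UNIV. subprob_algebra X)"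
    by (intro measurable_PiM_UNIV_I measurable_distr measurable_FM_component)
  then show ?thesis
    unfolding lam_def Dmap_def FM_def[of "subprob_algebra X"]
    by (intro measurable_Pair measurable_gI_distr) simp_all
qed

lemma lam_Dmap_Fmap:
  fixes \<Phi> :: "(real \<times> real \<times> ('a::finite \<Rightarrow> 'x)) measure"
  assumes f: "f \<in> X \<rightarrow>\<^sub>M Y" and \<Phi>: "\<Phi> \<in> space (subprob_algebra (FM X))"
  shows "lam Y (Dmap (FM Y :: (real \<times> real \<times> ('a \<Rightarrow> 'y)) measure) (Fmap f) \<Phi>)
           = Fmap (Dmap Y f) (lam X \<Phi>)"
proof -
  have sets_\<Phi>: "sets \<Phi> = sets (FM X)"
    using \<Phi> by (rule sets_eq_of_space_subprob_algebra)
  have Fmap_f: "Fmap f \<in> \<Phi> \<rightarrow>\<^sub>M (FM Y :: (real \<times> real \<times> ('a \<Rightarrow> 'y)) measure)"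
    using measurable_Fmap[OF f] by (simp add: measurable_cong_sets[OF sets_\<Phi> refl])
  have component: "(\<lambda>p. snd (snd p) a) \<in> \<Phi> \<rightarrow>\<^sub>M X" for a
    by (simp add: measurable_cong_sets[OF sets_\<Phi> refl])
  have push: "Dmap M \<pi> (Dmap (FM Y) (Fmap f) \<Phi>) = Dmap M (\<pi> \<circ> Fmap f) \<Phi>"
    if "\<pi> \<in> (FM Y :: (real \<times> real \<times> ('a \<Rightarrow> 'y)) measure) \<rightarrow>\<^sub>M M" for M \<pi>
    using distr_distr[OF that Fmap_f] by (simp add: Dmap_def)
  have projections_Fmap: "fst \<circ> Fmap f = fst" "(\<lambda>p. fst (snd p)) \<circ> Fmap f = (\<lambda>p. fst (snd p))"
    "(\<lambda>p. snd (snd p) a) \<circ> Fmap f = f \<circ> (\<lambda>p. snd (snd p) a)" for a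
    by (auto simp: Fmap_def split_beta')
  show ?thesis
    using distr_distr[OF f component]
    by (simp add: lam_def push projections_Fmap) (simp add: Dmap_def Fmap_def)
qed

lemma lam_return:
  fixes x :: "real \<times> real \<times> ('a::finite \<Rightarrow> 'x)"
  assumes x: "x \<in> space (FM X)"
  shows "lam X (return (FM X) x) = Fmap (return X) x"
  using x measurable_space[OF measurable_FM_fst x] measurable_space[OF measurable_FM_fst_snd x]
  by (simp add: lam_def Dmap_def Fmap_def split_beta' gI_return distr_return)

lemma lam_join:
  fixes \<Psi> :: "(real \<times> real \<times> ('a::finite \<Rightarrow> 'x)) measure measure"
  assumes \<Psi>: "\<Psi> \<in> space (subprob_algebra (subprob_algebra (FM X)))"
  shows "Fmap join (lam (subprob_algebra X)
           (Dmap (FM (subprob_algebra X) :: (real \<times> real \<times> ('a \<Rightarrow> 'x measure)) measure) (lam X) \<Psi>))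
         = lam X (join \<Psi>)"
proof -
  let ?L = "FM (subprob_algebra X) :: (real \<times> real \<times> ('a \<Rightarrow> 'x measure)) measure"
  have sets_\<Psi>: "sets \<Psi> = sets (subprob_algebra (FM X))"
    using \<Psi> by (rule sets_eq_of_space_subprob_algebra)
  have lam_X: "lam X \<in> \<Psi> \<rightarrow>\<^sub>M ?L"
    using measurable_lam by (simp add: measurable_cong_sets[OF sets_\<Psi> refl])
  have mean: "gI (distr (distr \<Psi> ?L (lam X)) unitI \<rho>) = gI (distr (join \<Psi>) unitI \<pi>)"
    if \<rho>: "\<rho> \<in> ?L \<rightarrow>\<^sub>M unitI" "\<rho> \<circ> lam X = (\<lambda>\<Phi>. gI (distr \<Phi> unitI \<pi>))"
      and \<pi>: "\<pi> \<in> FM X \<rightarrow>\<^sub>M unitI" for \<rho> \<pi>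
  proof -
    have "gI (distr (distr \<Psi> ?L (lam X)) unitI \<rho>) = gI (distr \<Psi> unitI (\<lambda>\<Phi>. gI (distr \<Phi> unitI \<pi>)))"
      using distr_distr[OF \<rho>(1) lam_X] by (simp add: \<rho>(2))
    also have "\<dots> = gI (distr (join \<Psi>) unitI \<pi>)"
      using \<Psi> \<pi> by (simp add: gI_distr measurable_gI_distr gI_distr_join)
    finally show ?thesis .
  qed
  have letter: "join (distr (distr \<Psi> ?L (lam X)) (subprob_algebra X) (\<lambda>p. snd (snd p) a))
                  = distr (join \<Psi>) X (\<lambda>p. snd (snd p) a)" for a
  proof -
    have "(\<lambda>p. snd (snd p) a) \<circ> lam X = (\<lambda>\<Phi>. distr \<Phi> X (\<lambda>p. snd (snd p) a))"
      by (auto simp: lam_def Dmap_def)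
    then show ?thesis
      using distr_distr[OF measurable_FM_component lam_X] join_distr_distr[OF sets_\<Psi> measurable_FM_component]
      by simp
  qed
  have "gI (distr (distr \<Psi> ?L (lam X)) unitI fst) = gI (distr (join \<Psi>) unitI fst)"
    by (rule mean[OF measurable_FM_fst _ measurable_FM_fst]) (simp add: lam_def Dmap_def comp_def)
  moreover have "gI (distr (distr \<Psi> ?L (lam X)) unitI (\<lambda>p. fst (snd p)))
                   = gI (distr (join \<Psi>) unitI (\<lambda>p. fst (snd p)))"
    by (rule mean[OF measurable_FM_fst_snd _ measurable_FM_fst_snd]) (simp add: lam_def Dmap_def comp_def)
  ultimately show ?thesis
    by (simp add: Fmap_def lam_def[of "subprob_algebra X"] lam_def[of X "join \<Psi>"] Dmap_def letter)
qed

theorem mainTheorem6: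
  fixes X :: "'x measure"
  shows "lam X \<in> subprob_algebra (FM X :: (real \<times> real \<times> ('a::finite \<Rightarrow> 'x)) measure)
                  \<rightarrow>\<^sub>M (FM (subprob_algebra X) :: (real \<times> real \<times> ('a \<Rightarrow> 'x measure)) measure)
    \<and> (\<forall>(Y :: 'y measure) f. f \<in> X \<rightarrow>\<^sub>M Y \<longrightarrow>
         (\<forall>\<Phi> \<in> space (subprob_algebra (FM X :: (real \<times> real \<times> ('a \<Rightarrow> 'x)) measure)).
           lam Y (Dmap (FM Y :: (real \<times> real \<times> ('a \<Rightarrow> 'y)) measure) (Fmap f) \<Phi>)
             = Fmap (Dmap Y f) (lam X \<Phi>)))
    \<and> (\<forall>x \<in> space (FM X :: (real \<times> real \<times> ('a \<Rightarrow> 'x)) measure).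
           lam X (return (FM X :: (real \<times> real \<times> ('a \<Rightarrow> 'x)) measure) x) = Fmap (return X) x)
    \<and> (\<forall>\<Psi> \<in> space (subprob_algebra (subprob_algebra (FM X :: (real \<times> real \<times> ('a \<Rightarrow> 'x)) measure))).
           Fmap join (lam (subprob_algebra X)
               (Dmap (FM (subprob_algebra X) :: (real \<times> real \<times> ('a \<Rightarrow> 'x measure)) measure) (lam X) \<Psi>))
             = lam X (join \<Psi>))"
  using measurable_lam lam_Dmap_Fmap lam_return lam_join by blast

end
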